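(* Let $A_1,\dots,A_n$ be commutative rings with unity and $B=A_1\oplus\cdots\oplus A_n$ their direct product. Let $(a_1,\dots,a_n)\in B$ be a non-zero, non-unit element. If $(a_1,\dots,a_n)$ is F-irreducible in $B$, then there exists $i\in\{1,\dots,n\}$ such that $a_i$ is F-irreducible in $A_i$ and $a_j$ is a unit of $A_j$ for every $j\neq i$.
   Context: For a commutative ring with unity $R$ and $r\in R$: a factorization of $r$ is an expression $r=a_1\cdots a_m$ with $a_k\in R$; a refinement of this factorization is a factorization obtained by replacing one or more of the factors by a factorization of that factor. A non-unit element $r\in R$ is called F-irreducible if every factorization of $r$ has a refinement in which $r$ appears as one of the new factors. *)

theory Defs
  imports "HOL-Algebra.Ring"
begin

definition list_prod :: "('a, 'b) ring_scheme \<Rightarrow> 'a list \<Rightarrow> 'a" where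
  "list_prod R xs = foldr (\<lambda>x y. x \<otimes>\<^bsub>R\<^esub> y) xs \<one>\<^bsub>R\<^esub>"

definition is_factorization :: "('a, 'b) ring_scheme \<Rightarrow> 'a \<Rightarrow> 'a list \<Rightarrow> bool" where
  "is_factorization R r as \<longleftrightarrow> set as \<subseteq> carrier R \<and> list_prod R as = r"

text \<open>A refinement of the factorization as: each factor a_k is replaced by a factorization
  bss!k of a_k (leaving a factor unchanged corresponds to the one-element factorization [a_k]).
  The refined factorization is concat bss.\<close>
definition is_refinement :: "('a, 'b) ring_scheme \<Rightarrow> 'a list \<Rightarrow> 'a list list \<Rightarrow> bool" where
  "is_refinement R as bss \<longleftrightarrow> length bss = length as \<and>
     (\<forall>k < length as. is_factorization R (as ! k) (bss ! k))"

definition F_irreducible :: "('a, 'b) ring_scheme \<Rightarrow> 'a \<Rightarrow> bool" where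
  "F_irreducible R r \<longleftrightarrow> r \<in> carrier R \<and> r \<notin> Units R \<and>
     (\<forall>as. is_factorization R r as \<longrightarrow>
        (\<exists>bss. is_refinement R as bss \<and>
           (\<exists>k < length as. bss ! k \<noteq> [as ! k] \<and> r \<in> set (bss ! k))))"

definition prod_ring :: "(nat \<Rightarrow> 'a ring) \<Rightarrow> nat set \<Rightarrow> (nat \<Rightarrow> 'a) ring" where
  "prod_ring A I = \<lparr>carrier = PiE I (\<lambda>i. carrier (A i)),
     monoid.mult = (\<lambda>x y. \<lambda>i\<in>I. x i \<otimes>\<^bsub>A i\<^esub> y i),
     one = (\<lambda>i\<in>I. \<one>\<^bsub>A i\<^esub>),
     zero = (\<lambda>i\<in>I. \<zero>\<^bsub>A i\<^esub>),
     add = (\<lambda>x y. \<lambda>i\<in>I. x i \<oplus>\<^bsub>A i\<^esub> y i)\<rparr>"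

end

theory Submission
  imports Defs "HOL-Algebra.Divisibility"
begin

text \<open>In a commutative monoid, r is F-irreducible iff it is a non-unit dividing some factor of
  every factorization of r.  Since a is not a unit, some coordinate a i is not a unit.  A
  factorization x_1 \<cdots> x_m of a i yields the factorization
  a = u \<cdot> e(x_1) \<cdots> e(x_m) in the product, where e(x) has x in coordinate i and \<one>
  elsewhere, and u is a with coordinate i replaced by \<one>.  As a i is not a unit, a cannot divide
  u, so a divides some e(x_k): then a i divides x_k, and a j divides \<one> for every j \<noteq> i.\<close>

lemma list_prod_Cons: "list_prod R (x # xs) = x \<otimes>\<^bsub>R\<^esub> list_prod R xs"
  by (simp add: list_prod_def)

lemma F_irreducible_iff_divides_factor:
  fixes R :: "('a, 'b) ring_scheme" (structure)
  assumes "comm_monoid R"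
  shows "F_irreducible R r \<longleftrightarrow> r \<in> carrier R \<and> r \<notin> Units R \<and>
     (\<forall>as. is_factorization R r as \<longrightarrow> (\<exists>x\<in>set as. r divides x))"
proof
  interpret comm_monoid R by fact
  assume F: "F_irreducible R r"
  have "\<exists>x\<in>set as. r divides x" if "is_factorization R r as" for as
  proof -
    obtain bss k where bss: "is_refinement R as bss" and k: "k < length as" "r \<in> set (bss ! k)"
      using F \<open>is_factorization R r as\<close> unfolding F_irreducible_def by blast
    then have "is_factorization R (as ! k) (bss ! k)"
      by (simp add: is_refinement_def)
    then have "r divides as ! k"
      using k multlist_dividesI by (metis is_factorization_def list_prod_def)
    then show ?thesis
      using k by auto
  qed
  then show "r \<in> carrier R \<and> r \<notin> Units R \<and>
      (\<forall>as. is_factorization R r as \<longrightarrow> (\<exists>x\<in>set as. r divides x))"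
    using F unfolding F_irreducible_def by blast
next
  interpret comm_monoid R by fact
  assume r: "r \<in> carrier R \<and> r \<notin> Units R \<and>
      (\<forall>as. is_factorization R r as \<longrightarrow> (\<exists>x\<in>set as. r divides x))"
  have "\<exists>bss. is_refinement R as bss \<and>
           (\<exists>k < length as. bss ! k \<noteq> [as ! k] \<and> r \<in> set (bss ! k))"
    if as: "is_factorization R r as" for as
  proof -
    obtain k where k: "k < length as" and "r divides as ! k"
      using r as by (metis in_set_conv_nth)
    then obtain c where c: "c \<in> carrier R" "as ! k = r \<otimes> c"
      by blast
    define bss where "bss = (map (\<lambda>y. [y]) as)[k := [r, c]]"
    have "is_refinement R as bss"
      using as k c r
      by (auto simp: is_refinement_def is_factorization_def list_prod_def bss_def nth_list_update
          dest: nth_mem)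
    moreover have "bss ! k \<noteq> [as ! k] \<and> r \<in> set (bss ! k)"
      using k by (simp add: bss_def)
    ultimately show ?thesis
      using k by blast
  qed
  then show "F_irreducible R r"
    using r unfolding F_irreducible_def by blast
qed

lemma carrier_prod_ring [simp]: "carrier (prod_ring A I) = (\<Pi>\<^sub>E i\<in>I. carrier (A i))"
  by (simp add: prod_ring_def)

lemma mult_prod_ring [simp]: "x \<otimes>\<^bsub>prod_ring A I\<^esub> y = (\<lambda>i\<in>I. x i \<otimes>\<^bsub>A i\<^esub> y i)"
  by (simp add: prod_ring_def)

lemma one_prod_ring [simp]: "\<one>\<^bsub>prod_ring A I\<^esub> = (\<lambda>i\<in>I. \<one>\<^bsub>A i\<^esub>)"
  by (simp add: prod_ring_def)

lemma comm_monoid_prod_ring: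
  assumes "\<And>i. i \<in> I \<Longrightarrow> comm_monoid (A i)"
  shows "comm_monoid (prod_ring A I)"
proof (rule comm_monoidI)
  have m: "\<And>i. i \<in> I \<Longrightarrow> monoid (A i)"
    using assms comm_monoid.axioms(1) by blast
  fix x y z
  assume "x \<in> carrier (prod_ring A I)" "y \<in> carrier (prod_ring A I)" "z \<in> carrier (prod_ring A I)"
  then show "x \<otimes>\<^bsub>prod_ring A I\<^esub> y \<otimes>\<^bsub>prod_ring A I\<^esub> z =
      x \<otimes>\<^bsub>prod_ring A I\<^esub> (y \<otimes>\<^bsub>prod_ring A I\<^esub> z)"
    and "x \<otimes>\<^bsub>prod_ring A I\<^esub> y = y \<otimes>\<^bsub>prod_ring A I\<^esub> x"
    and "x \<otimes>\<^bsub>prod_ring A I\<^esub> y \<in> carrier (prod_ring A I)"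
    and "\<one>\<^bsub>prod_ring A I\<^esub> \<otimes>\<^bsub>prod_ring A I\<^esub> x = x"
    using m assms
    by (auto simp: fun_eq_iff PiE_iff extensional_def monoid.m_assoc monoid.m_closed
        intro: comm_monoid.m_comm)
qed (use assms comm_monoid.axioms(1) in auto)

lemma prod_ring_UnitsI:
  assumes "\<And>i. i \<in> I \<Longrightarrow> monoid (A i)"
    and "a \<in> carrier (prod_ring A I)" and "\<And>i. i \<in> I \<Longrightarrow> a i \<in> Units (A i)"
  shows "a \<in> Units (prod_ring A I)"
proof -
  define b where "b = (\<lambda>i\<in>I. inv\<^bsub>A i\<^esub> (a i))"
  have "b \<in> carrier (prod_ring A I)"
    using assms by (simp add: b_def monoid.Units_inv_closed)
  moreover have "b \<otimes>\<^bsub>prod_ring A I\<^esub> a = \<one>\<^bsub>prod_ring A I\<^esub>"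
    and "a \<otimes>\<^bsub>prod_ring A I\<^esub> b = \<one>\<^bsub>prod_ring A I\<^esub>"
    using assms by (auto simp: b_def fun_eq_iff monoid.Units_l_inv monoid.Units_r_inv)
  ultimately show ?thesis
    using assms(2) unfolding Units_def by blast
qed

lemma divides_prod_ring_component:
  assumes "x divides\<^bsub>prod_ring A I\<^esub> y" and "i \<in> I"
  shows "x i divides\<^bsub>A i\<^esub> y i"
  using assms by (auto simp: factor_def)

definition prod_ring_embed :: "(nat \<Rightarrow> 'a ring) \<Rightarrow> nat set \<Rightarrow> nat \<Rightarrow> 'a \<Rightarrow> nat \<Rightarrow> 'a" where
  "prod_ring_embed A I i x = (\<lambda>k\<in>I. \<one>\<^bsub>A k\<^esub>)(i := x)"

lemma prod_ring_embed_closed: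
  assumes "\<And>k. k \<in> I \<Longrightarrow> monoid (A k)" and "i \<in> I" and "x \<in> carrier (A i)"
  shows "prod_ring_embed A I i x \<in> carrier (prod_ring A I)"
  using assms by (auto simp: prod_ring_embed_def PiE_def extensional_def)

lemma list_prod_map_prod_ring_embed:
  assumes "\<And>k. k \<in> I \<Longrightarrow> monoid (A k)" and "i \<in> I"
  shows "list_prod (prod_ring A I) (map (prod_ring_embed A I i) xs) =
           prod_ring_embed A I i (list_prod (A i) xs)"
  using assms
  by (induction xs) (auto simp: list_prod_def prod_ring_embed_def fun_eq_iff)

lemma prod_ring_split_coordinate:
  assumes "\<And>k. k \<in> I \<Longrightarrow> monoid (A k)" and "a \<in> carrier (prod_ring A I)" and "i \<in> I"
  shows "a(i := \<one>\<^bsub>A i\<^esub>) \<otimes>\<^bsub>prod_ring A I\<^esub> prod_ring_embed A I i (a i) = a"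
  using assms by (auto simp: prod_ring_embed_def fun_eq_iff PiE_iff extensional_def)

lemma F_irreducible_prod_ring_divides_embed:
  assumes cm: "\<And>k. k \<in> I \<Longrightarrow> comm_monoid (A k)"
    and F: "F_irreducible (prod_ring A I) a"
    and i: "i \<in> I" "a i \<notin> Units (A i)"
    and xs: "is_factorization (A i) (a i) xs"
  shows "\<exists>x\<in>set xs. a divides\<^bsub>prod_ring A I\<^esub> prod_ring_embed A I i x"
proof -
  interpret P: comm_monoid "prod_ring A I"
    using cm by (rule comm_monoid_prod_ring)
  have m: "\<And>k. k \<in> I \<Longrightarrow> monoid (A k)"
    using cm comm_monoid.axioms(1) by blast
  have a: "a \<in> carrier (prod_ring A I)"
    using F by (simp add: F_irreducible_def)
  let ?u = "a(i := \<one>\<^bsub>A i\<^esub>)"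
  have "?u \<in> carrier (prod_ring A I)"
    using a i m by (auto simp: PiE_iff extensional_def)
  moreover have "list_prod (prod_ring A I) (?u # map (prod_ring_embed A I i) xs) = a"
    using xs prod_ring_split_coordinate[OF m a i(1)]
    by (simp add: list_prod_Cons list_prod_map_prod_ring_embed[OF m i(1)] is_factorization_def)
  moreover have "prod_ring_embed A I i x \<in> carrier (prod_ring A I)" if "x \<in> set xs" for x
    using xs that i(1) m prod_ring_embed_closed by (metis is_factorization_def subsetD)
  ultimately have "is_factorization (prod_ring A I) a (?u # map (prod_ring_embed A I i) xs)"
    unfolding is_factorization_def by auto
  then obtain y where y: "y \<in> set (?u # map (prod_ring_embed A I i) xs)"
    and a_dvd_y: "a divides\<^bsub>prod_ring A I\<^esub> y"
    using F F_irreducible_iff_divides_factor[OF P.comm_monoid_axioms] by blast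
  have "y \<noteq> ?u"
  proof
    assume "y = ?u"
    then have "a i divides\<^bsub>A i\<^esub> \<one>\<^bsub>A i\<^esub>"
      using divides_prod_ring_component[OF a_dvd_y i(1)] by simp
    then show False
      using i a comm_monoid.Unit_eq_dividesone[OF cm[OF i(1)]] by auto
  qed
  then show ?thesis
    using y a_dvd_y by auto
qed

lemma F_irreducible_prod_ring_other_units:
  assumes cm: "\<And>k. k \<in> I \<Longrightarrow> comm_monoid (A k)"
    and F: "F_irreducible (prod_ring A I) a"
    and i: "i \<in> I" "a i \<notin> Units (A i)"
    and j: "j \<in> I" "j \<noteq> i"
  shows "a j \<in> Units (A j)"
proof -
  interpret comm_monoid "A i"
    using cm i(1) .
  have a: "a \<in> carrier (prod_ring A I)"
    using F by (simp add: F_irreducible_def)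
  then have "a i \<in> carrier (A i)"
    using i(1) by auto
  then have "is_factorization (A i) (a i) [a i]"
    by (simp add: is_factorization_def list_prod_def)
  from F_irreducible_prod_ring_divides_embed[OF cm F i this]
  have "a divides\<^bsub>prod_ring A I\<^esub> prod_ring_embed A I i (a i)"
    by simp
  from divides_prod_ring_component[OF this j(1)]
  have "a j divides\<^bsub>A j\<^esub> \<one>\<^bsub>A j\<^esub>"
    using j by (simp add: prod_ring_embed_def)
  moreover have "a j \<in> carrier (A j)"
    using a j(1) by auto
  ultimately show ?thesis
    using comm_monoid.Unit_eq_dividesone[OF cm[OF j(1)]] by blast
qed

lemma F_irreducible_prod_ring_component:
  assumes cm: "\<And>k. k \<in> I \<Longrightarrow> comm_monoid (A k)"
    and F: "F_irreducible (prod_ring A I) a"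
    and i: "i \<in> I" "a i \<notin> Units (A i)"
  shows "F_irreducible (A i) (a i)"
proof -
  have "\<exists>x\<in>set xs. a i divides\<^bsub>A i\<^esub> x" if xs: "is_factorization (A i) (a i) xs" for xs
  proof -
    obtain x where "x \<in> set xs" "a divides\<^bsub>prod_ring A I\<^esub> prod_ring_embed A I i x"
      using F_irreducible_prod_ring_divides_embed[OF cm F i xs] by blast
    moreover have "prod_ring_embed A I i x i = x"
      by (simp add: prod_ring_embed_def)
    ultimately show ?thesis
      using divides_prod_ring_component[OF _ i(1)] by metis
  qed
  moreover have "a i \<in> carrier (A i)"
    using F i(1) by (auto simp: F_irreducible_def)
  ultimately show ?thesis
    using F_irreducible_iff_divides_factor[OF cm[OF i(1)]] i(2) by blast
qed

theorem mainTheorem6: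
  fixes A :: "nat \<Rightarrow> 'a ring" and n :: nat and a :: "nat \<Rightarrow> 'a"
  assumes "\<And>i. i \<in> {1..n} \<Longrightarrow> cring (A i)"
    and "a \<in> carrier (prod_ring A {1..n})"
    and "a \<noteq> \<zero>\<^bsub>prod_ring A {1..n}\<^esub>"
    and "a \<notin> Units (prod_ring A {1..n})"
    and "F_irreducible (prod_ring A {1..n}) a"
  shows "\<exists>i\<in>{1..n}. F_irreducible (A i) (a i) \<and>
           (\<forall>j\<in>{1..n}. j \<noteq> i \<longrightarrow> a j \<in> Units (A j))"
proof -
  have cm: "\<And>i. i \<in> {1..n} \<Longrightarrow> comm_monoid (A i)"
    using assms(1) cring.axioms(2) by blast
  then obtain i where i: "i \<in> {1..n}" "a i \<notin> Units (A i)"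
    using prod_ring_UnitsI[of "{1..n}" A a] assms(2,4) comm_monoid.axioms(1) by blast
  then show ?thesis
    using F_irreducible_prod_ring_component[OF cm assms(5) i]
      F_irreducible_prod_ring_other_units[OF cm assms(5) i] by blast
qed

end
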